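(* The boundary set $\partial\Xi=\{\xi\in\Xi:\ \kappa(\xi)>1\}$ is infinite; that is, there are infinitely many $\xi\in\Xi$ which are the fractional part of at least two distinct periodic points of the scaling map $\gamma$.
   Context: Let $\lambda$ be the real root of $x^3+x^2+x-1$, $\omega=\lambda^3=1-\lambda-\lambda^2$. Every $x\in\mathbb{Q}(\lambda)$ is uniquely $x=r_0+r_1\lambda+r_2\lambda^2$ with $r_i\in\mathbb{Q}$; set $\Xi=\{\xi_0+\xi_1\lambda+\xi_2\lambda^2:\ \xi_i\in\mathbb{Q}\cap[0,1)\}$ and $\Pi_f(x)=\{r_0\}+\{r_1\}\lambda+\{r_2\}\lambda^2\in\Xi$ (fractional parts of coordinates). Scaling map: put $N=7$ and the data (for $j=0,\dots,6$): $\tau_0=\lambda+\lambda^2$, $\tau_1=-1+3\lambda$, $\tau_2=\lambda-\lambda^2$, $\tau_3=-1+2\lambda+\lambda^2$, $\tau_4=1-\lambda-\lambda^2$, $\tau_5=\lambda-\lambda^2$, $\tau_6=-\lambda$; $(\nu_0,\dots,\nu_6)=(4,13,12,8,8,12,4)$; path function $p(j,t)$, $0\le t<\nu_j$, is the $(t+1)$-th entry of the list: $j=0$: $(0,6,3,6)$; $j=1$: $(0,6,3,6,1,6,2,5,6,1,6,3,6)$; $j=2$: $(0,6,3,6,1,6,2,5,6,2,4,6)$; $j=3$: $(0,6,3,6,1,6,3,6)$; $j=4$: $(0,6,4,5,6,2,4,6)$; $j=5$: $(0,6,4,5,6,2,5,6,1,6,3,6)$; $j=6$: $(0,6,4,6)$.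 Let $\mathcal{V}$ be the set of sequences $\sigma=((j_1,t_1),(j_2,t_2),\dots)$ with $0\le j_k\le 6$, $0\le t_k<\nu_{j_k}$, $j_k=p(j_{k+1},t_{k+1})$ for all $k\ge1$, and which do not end in any of the tails $(1,9)^\infty,(2,6)^\infty,(3,2)^\infty,(4,6)^\infty,(5,3)^\infty,(6,1)^\infty$. Put $d_i=\sum_{t=0}^{t_i-1}\tau_{p(j_i,t)}$ and $x(\sigma)=\sum_{i\ge1}d_i\omega^{i-1}$; the map $\sigma\mapsto x(\sigma)$ is a bijection $\mathcal{V}\to[0,1)$. The scaling map $\gamma:[0,1)\to[0,1)$ is $\gamma(x)=(x-d_1)\omega^{-1}$, where $d_1$ is the first digit of the code of $x$; it is conjugate to the left shift on $\mathcal{V}$. A periodic point of $\gamma$ is an $x$ with $\gamma^n(x)=x$ for some $n\ge1$. For $\xi\in\Xi$, the multiplicity $\kappa(\xi)$ is the number of periodic points $x$ of $\gamma$ with $\Pi_f(x)=\xi$. *)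

theory Defs
  imports Complex_Main "HOL-Library.Extended_Nat"
begin

text \<open>lambda: the real root of x^3 + x^2 + x - 1 (unique, since the polynomial is strictly increasing).\<close>
definition lam :: real where
  "lam = (THE x::real. x ^ 3 + x ^ 2 + x - 1 = 0)"

definition omega :: real where
  "omega = lam ^ 3"

definition in_Qlam :: "real \<Rightarrow> bool" where
  "in_Qlam x \<longleftrightarrow> (\<exists>r0 r1 r2 :: rat. x = of_rat r0 + of_rat r1 * lam + of_rat r2 * lam ^ 2)"

definition coords :: "real \<Rightarrow> rat \<times> rat \<times> rat" where
  "coords x = (THE (r0, r1, r2). x = of_rat r0 + of_rat r1 * lam + of_rat r2 * lam ^ 2)"

definition Pi_f :: "real \<Rightarrow> real" where
  "Pi_f x = (case coords x of (r0, r1, r2) \<Rightarrow>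
      of_rat (frac r0) + of_rat (frac r1) * lam + of_rat (frac r2) * lam ^ 2)"

definition Xi :: "real set" where
  "Xi = {of_rat a0 + of_rat a1 * lam + of_rat a2 * lam ^ 2 | a0 a1 a2 :: rat.
          0 \<le> a0 \<and> a0 < 1 \<and> 0 \<le> a1 \<and> a1 < 1 \<and> 0 \<le> a2 \<and> a2 < 1}"

definition tau_list :: "real list" where
  "tau_list = [lam + lam ^ 2, -1 + 3 * lam, lam - lam ^ 2, -1 + 2 * lam + lam ^ 2,
               1 - lam - lam ^ 2, lam - lam ^ 2, - lam]"

definition tau :: "nat \<Rightarrow> real" where
  "tau j = tau_list ! j"

definition nu :: "nat \<Rightarrow> nat" where
  "nu j = [4, 13, 12, 8, 8, 12, 4] ! j"

definition path_list :: "nat list list" where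
  "path_list =
    [[0,6,3,6],
     [0,6,3,6,1,6,2,5,6,1,6,3,6],
     [0,6,3,6,1,6,2,5,6,2,4,6],
     [0,6,3,6,1,6,3,6],
     [0,6,4,5,6,2,4,6],
     [0,6,4,5,6,2,5,6,1,6,3,6],
     [0,6,4,6]]"

definition p :: "nat \<Rightarrow> nat \<Rightarrow> nat" where
  "p j t = path_list ! j ! t"

text \<open>Sequences sigma = ((j_1,t_1),(j_2,t_2),...) are encoded as functions on nat,
  with sigma 0 = (j_1,t_1).\<close>
definition excluded_tails :: "(nat \<times> nat) set" where
  "excluded_tails = {(1,9), (2,6), (3,2), (4,6), (5,3), (6,1)}"

definition V :: "(nat \<Rightarrow> nat \<times> nat) set" where
  "V = {\<sigma>. (\<forall>k. fst (\<sigma> k) \<le> 6 \<and> snd (\<sigma> k) < nu (fst (\<sigma> k)))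
          \<and> (\<forall>k. fst (\<sigma> k) = p (fst (\<sigma> (Suc k))) (snd (\<sigma> (Suc k))))
          \<and> \<not> (\<exists>a\<in>excluded_tails. \<exists>m. \<forall>k\<ge>m. \<sigma> k = a)}"

definition digit :: "nat \<times> nat \<Rightarrow> real" where
  "digit jt = (\<Sum>t<snd jt. tau (p (fst jt) t))"

definition xval :: "(nat \<Rightarrow> nat \<times> nat) \<Rightarrow> real" where
  "xval \<sigma> = (\<Sum>i. digit (\<sigma> i) * omega ^ i)"

definition code :: "real \<Rightarrow> (nat \<Rightarrow> nat \<times> nat)" where
  "code x = (THE \<sigma>. \<sigma> \<in> V \<and> xval \<sigma> = x)"

definition gamma :: "real \<Rightarrow> real" where
  "gamma x = (x - digit (code x 0)) / omega"

definition periodic_point :: "real \<Rightarrow> bool" where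
  "periodic_point x \<longleftrightarrow> x \<in> {0..<1} \<and> (\<exists>n\<ge>1. (gamma ^^ n) x = x)"

definition kappa :: "real \<Rightarrow> enat" where
  "kappa \<xi> = (let S = {x. periodic_point x \<and> in_Qlam x \<and> Pi_f x = \<xi>}
              in if finite S then enat (card S) else \<infinity>)"

definition boundary_Xi :: "real set" where
  "boundary_Xi = {\<xi> \<in> Xi. kappa \<xi> > 1}"

end

theory Submission
  imports Defs "HOL-Number_Theory.Cong"
begin

text \<open>
  For every period \<open>n \<ge> 2\<close> the codes \<open>code_a n\<close> and \<open>code_b n\<close> below are
  admissible and periodic, and their values differ by \<open>(1 - \<lambda>)\<^sup>2 \<in> \<int>[\<lambda>]\<close>; so
  \<open>x\<^sub>n = x(code_b n)\<close> and \<open>x\<^sub>n + (1 - \<lambda>)\<^sup>2\<close> are two periodic points with the same fractional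
  part, and \<open>\<Pi>\<^sub>f(x\<^sub>n)\<close> lies on the boundary. Here \<open>x\<^sub>n (1 - \<omega>\<^sup>n) = 2\<lambda>\<^sup>2 - \<lambda>\<close>. If the
  boundary were finite, its points would have a common denominator \<open>D\<close>, so \<open>D x\<^sub>n \<in> \<int>[\<lambda>]\<close>
  for all \<open>n\<close>. As \<open>\<omega>\<close> is a unit of \<open>\<int>[\<lambda>]\<close>, some \<open>\<omega>\<^sup>n\<close> with \<open>n \<ge> 2\<close> is \<open>\<equiv> 1\<close> modulo
  \<open>D + 1\<close>, and then \<open>D (2\<lambda>\<^sup>2 - \<lambda>) = D x\<^sub>n (1 - \<omega>\<^sup>n)\<close> would be divisible by \<open>D + 1\<close> in
  \<open>\<int>[\<lambda>]\<close>, which it is not since \<open>1, \<lambda>, \<lambda>\<^sup>2\<close> are linearly independent over \<open>\<rat>\<close>.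

  To evaluate \<open>\<gamma>\<close> on these points, the coding must be injective on \<open>V\<close>: the images of the
  61 digits tile \<open>[0, 1)\<close> in a fixed order, and a code lies in the tile of its first digit,
  the excluded tails being exactly what keeps it off the right endpoints.
\<close>

section \<open>The real root \<open>\<lambda>\<close>\<close>

lemma cubic_strict_mono:
  fixes x y :: real
  assumes "x < y"
  shows "x ^ 3 + x ^ 2 + x < y ^ 3 + y ^ 2 + y"
proof -
  have "0 < (x + y) ^ 2 + (x + 1) ^ 2 + (y + 1) ^ 2"
    using assms by (smt (verit) power2_less_0 zero_less_power2)
  then have "0 < x ^ 2 + x * y + y ^ 2 + x + y + 1"
    by (simp add: power2_eq_square algebra_simps)
  then have "0 < (y - x) * (x ^ 2 + x * y + y ^ 2 + x + y + 1)"
    using assms by simp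
  then show ?thesis
    by (simp add: power2_eq_square power3_eq_cube algebra_simps)
qed

lemma lam_root_unique: "\<exists>!x::real. x ^ 3 + x ^ 2 + x - 1 = 0"
proof -
  have "\<exists>x\<ge>0. x \<le> 1 \<and> x ^ 3 + x ^ 2 + x - 1 = (0::real)"
    by (rule IVT') (auto intro!: continuous_intros)
  then obtain x :: real where x: "x ^ 3 + x ^ 2 + x - 1 = 0"
    by blast
  moreover have "y = x" if "y ^ 3 + y ^ 2 + y - 1 = 0" for y :: real
    using cubic_strict_mono[of x y] cubic_strict_mono[of y x] x that
    by (cases x y rule: linorder_cases) auto
  ultimately show ?thesis
    by blast
qed

lemma lam_cube: "lam ^ 3 = 1 - lam - lam ^ 2"
proof -
  have "lam ^ 3 + lam ^ 2 + lam - 1 = 0"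
    unfolding lam_def by (rule theI'[OF lam_root_unique])
  then show ?thesis by simp
qed

lemma cubic_mono:
  fixes x y :: real
  assumes "x \<le> y"
  shows "x ^ 3 + x ^ 2 + x \<le> y ^ 3 + y ^ 2 + y"
  using cubic_strict_mono[of x y] assms by (cases "x = y") auto

lemma lam_bounds: "0.5436890126 < lam" "lam < 0.5436890127"
proof -
  have root: "lam ^ 3 + lam ^ 2 + lam = 1"
    using lam_cube by simp
  show "0.5436890126 < lam"
    using cubic_mono[of lam "0.5436890126"] root
    by (force simp: power3_eq_cube power2_eq_square)
  show "lam < 0.5436890127"
    using cubic_mono[of "0.5436890127" lam] root
    by (force simp: power3_eq_cube power2_eq_square)
qed

section \<open>Arithmetic in \<open>\<rat>(\<lambda>)\<close>\<close>

definition lam_comb :: "real \<Rightarrow> real \<Rightarrow> real \<Rightarrow> real" where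
  "lam_comb a b c = a + b * lam + c * lam ^ 2"

lemma lam_comb_add: "lam_comb a b c + lam_comb a' b' c' = lam_comb (a + a') (b + b') (c + c')"
  and lam_comb_diff: "lam_comb a b c - lam_comb a' b' c' = lam_comb (a - a') (b - b') (c - c')"
  and lam_comb_scale: "x * lam_comb a b c = lam_comb (x * a) (x * b) (x * c)"
  and lam_comb_const: "lam_comb x 0 0 = x"
  by (simp_all add: lam_comb_def algebra_simps)

lemma lam_comb_mult:
  "lam_comb a b c * lam_comb d e f =
     lam_comb (a*d + b*f + c*e - c*f) (a*e + b*d - b*f - c*e + 2*c*f) (a*f + b*e + c*d - b*f - c*e)"
proof -
  have lam4: "lam ^ 4 = 2 * lam - 1"
    using lam_cube by algebra
  have "lam_comb a b c * lam_comb d e f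
      = a*d + (a*e + b*d)*lam + (a*f + b*e + c*d)*lam^2 + (b*f + c*e)*lam^3 + c*f*lam^4"
    unfolding lam_comb_def by algebra
  then show ?thesis
    unfolding lam_cube lam4 lam_comb_def by algebra
qed

lemma omega_eq: "omega = lam_comb 1 (-1) (-1)"
  unfolding omega_def lam_comb_def lam_cube by simp

lemma omega_mult: "omega * lam_comb a b c = lam_comb (a - b) (2*b - a - c) (2*c - a)"
  unfolding omega_eq lam_comb_mult by (simp add: algebra_simps)

text \<open>All numeric comparisons below reduce, through \<open>lam_comb_sign_simps\<close>, to this interval
  bound.\<close>
definition lam_comb_lower :: "real \<Rightarrow> real \<Rightarrow> real \<Rightarrow> real" where
  "lam_comb_lower a b c = a
     + (if 0 \<le> b then b * 0.5436890126 else b * 0.5436890127)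
     + (if 0 \<le> c then c * 0.5436890126 ^ 2 else c * 0.5436890127 ^ 2)"

lemma lam_comb_lower_le: "lam_comb_lower a b c \<le> lam_comb a b c"
proof -
  have lo: "0.5436890126 \<le> lam" and hi: "lam \<le> 0.5436890127"
    using lam_bounds by simp_all
  have lo2: "0.5436890126 ^ 2 \<le> lam ^ 2" and hi2: "lam ^ 2 \<le> (0.5436890127::real) ^ 2"
    using lo hi by (auto intro!: power_mono)
  have "(if 0 \<le> b then b * 0.5436890126 else b * 0.5436890127) \<le> b * lam"
    using mult_left_mono[OF lo, of b] mult_left_mono_neg[OF hi, of b] by auto
  moreover have "(if 0 \<le> c then c * 0.5436890126 ^ 2 else c * 0.5436890127 ^ 2) \<le> c * lam ^ 2"
    using mult_left_mono[OF lo2, of c] mult_left_mono_neg[OF hi2, of c] by auto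
  ultimately show ?thesis
    unfolding lam_comb_lower_def lam_comb_def by linarith
qed

lemma lam_comb_pos: "0 < lam_comb_lower a b c \<Longrightarrow> 0 < lam_comb a b c"
  and lam_comb_nonneg: "0 \<le> lam_comb_lower a b c \<Longrightarrow> 0 \<le> lam_comb a b c"
  using lam_comb_lower_le[of a b c] by linarith+

lemma lam_comb_le_iff: "lam_comb a b c \<le> lam_comb a' b' c' \<longleftrightarrow> 0 \<le> lam_comb (a' - a) (b' - b) (c' - c)"
  and lam_comb_less_iff: "lam_comb a b c < lam_comb a' b' c' \<longleftrightarrow> 0 < lam_comb (a' - a) (b' - b) (c' - c)"
  by (simp_all add: lam_comb_def algebra_simps)

lemmas lam_comb_sign_simps =
  lam_comb_le_iff lam_comb_less_iff lam_comb_pos lam_comb_nonneg lam_comb_lower_def power2_eq_square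

lemma omega_bounds: "0 < omega" "omega < 1/2"
proof -
  show "0 < omega"
    unfolding omega_eq by (simp add: lam_comb_sign_simps)
  have "0 < lam_comb (1/2 - 1) 1 1"
    by (simp add: lam_comb_sign_simps)
  then show "omega < 1/2"
    unfolding omega_eq lam_comb_def by simp
qed

lemma common_denominator:
  fixes R :: "rat set"
  assumes "finite R"
  shows "\<exists>D::int. 0 < D \<and> (\<forall>r\<in>R. of_int D * r \<in> \<int>)"
proof (intro exI conjI ballI)
  define den where "den r = snd (quotient_of r)" for r
  show "0 < (\<Prod>r\<in>R. den r)"
    by (intro prod_pos) (simp add: den_def quotient_of_denom_pos')
  fix r assume "r \<in> R"
  obtain a b where ab: "quotient_of r = (a, b)"
    by (cases "quotient_of r")
  have "of_int (den r) * r = of_int a"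
    using ab quotient_of_denom_pos[OF ab] by (simp add: den_def quotient_of_div[OF ab])
  moreover have "(\<Prod>r\<in>R. den r) = den r * (\<Prod>r\<in>R - {r}. den r)"
    using assms \<open>r \<in> R\<close> by (simp add: prod.remove)
  ultimately have "of_int (\<Prod>r\<in>R. den r) * r = of_int (a * (\<Prod>r\<in>R - {r}. den r))"
    by (simp add: algebra_simps)
  then show "of_int (\<Prod>r\<in>R. den r) * r \<in> \<int>"
    by (metis Ints_of_int)
qed

text \<open>The field norm of \<open>a + b\<lambda> + c\<lambda>\<^sup>2\<close>.\<close>
definition lam_norm :: "'a::comm_ring_1 \<Rightarrow> 'a \<Rightarrow> 'a \<Rightarrow> 'a" where
  "lam_norm a b c = a * ((a - c) * (a - b) - (2*c - b) * (b - c))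
     + c * ((2*c - b) * c - b * (a - b)) + (b - c) * (b * (b - c) - (a - c) * c)"

lemma lam_comb_mult_adj:
  "lam_comb a b c * lam_comb ((a - c) * (a - b) - (2*c - b) * (b - c)) ((2*c - b) * c - b * (a - b))
     (b * (b - c) - (a - c) * c) = lam_norm a b c"
  unfolding lam_comb_mult lam_norm_def by (simp add: lam_comb_def algebra_simps)

lemma lam_norm_homogeneous: "lam_norm (k * a) (k * b) (k * c) = k ^ 3 * lam_norm a b c"
  unfolding lam_norm_def by (simp add: power3_eq_cube algebra_simps)

text \<open>Modulo 3 the norm form only vanishes trivially, since \<open>x\<^sup>3 + x\<^sup>2 + x - 1\<close> has no
  root in \<open>\<int>/3\<close>; hence an integer zero is divisible by 3 and descends.\<close>
lemma lam_norm_dvd_3: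
  fixes a b c :: int
  assumes "3 dvd lam_norm a b c"
  shows "3 dvd a \<and> 3 dvd b \<and> 3 dvd c"
proof -
  have residues: "x mod 3 \<in> {0, 1, 2}" for x :: int
    by auto
  have "[lam_norm a b c = lam_norm (a mod 3) (b mod 3) (c mod 3)] (mod 3)"
    unfolding lam_norm_def
    by (intro cong_add cong_mult cong_diff cong_refl) (simp_all add: cong_def)
  then have "lam_norm (a mod 3) (b mod 3) (c mod 3) mod 3 = 0"
    using assms by (simp add: cong_def)
  then have "a mod 3 = 0 \<and> b mod 3 = 0 \<and> c mod 3 = 0"
    using residues[of a] residues[of b] residues[of c] by (auto simp: lam_norm_def)
  then show ?thesis
    by auto
qed

lemma lam_norm_int_eq_0:
  fixes a b c :: int
  assumes "lam_norm a b c = 0"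
  shows "a = 0 \<and> b = 0 \<and> c = 0"
  using assms
proof (induction "nat (\<bar>a\<bar> + \<bar>b\<bar> + \<bar>c\<bar>)" arbitrary: a b c rule: less_induct)
  case less
  then have "3 dvd a \<and> 3 dvd b \<and> 3 dvd c"
    by (intro lam_norm_dvd_3) simp
  then obtain a' b' c' where abc: "a = 3 * a'" "b = 3 * b'" "c = 3 * c'"
    by (auto elim!: dvdE)
  have "lam_norm a' b' c' = 0"
    using less.prems lam_norm_homogeneous[of 3 a' b' c'] abc by simp
  moreover have "nat (\<bar>a'\<bar> + \<bar>b'\<bar> + \<bar>c'\<bar>) < nat (\<bar>a\<bar> + \<bar>b\<bar> + \<bar>c\<bar>)"
    if "\<not> (a' = 0 \<and> b' = 0 \<and> c' = 0)"
    using that abc by auto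
  ultimately show ?case
    using less.hyps abc by fastforce
qed

lemma lam_norm_of_rat: "lam_norm (of_rat a) (of_rat b) (of_rat c) = (of_rat (lam_norm a b c) :: real)"
  by (simp add: lam_norm_def of_rat_add of_rat_diff of_rat_mult)

lemma lam_norm_rat_eq_0:
  fixes a b c :: rat
  assumes "lam_norm a b c = 0"
  shows "a = 0 \<and> b = 0 \<and> c = 0"
proof -
  obtain D :: int where "0 < D" and "\<forall>r\<in>{a, b, c}. of_int D * r \<in> \<int>"
    using common_denominator[of "{a, b, c}"] by auto
  then obtain a' b' c' :: int
    where a': "of_int D * a = of_int a'" and b': "of_int D * b = of_int b'"
      and c': "of_int D * c = of_int c'"
    by (auto elim!: Ints_cases)
  have "of_int (lam_norm a' b' c') = lam_norm (of_int D * a) (of_int D * b) (of_int D * c)"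
    unfolding a' b' c' by (simp add: lam_norm_def)
  also have "\<dots> = 0"
    using assms by (simp add: lam_norm_homogeneous)
  finally have "a' = 0 \<and> b' = 0 \<and> c' = 0"
    by (intro lam_norm_int_eq_0) simp
  then show ?thesis
    using a' b' c' \<open>0 < D\<close> by simp
qed

lemma lam_comb_rat_eq_0_iff:
  "lam_comb (of_rat a) (of_rat b) (of_rat c) = 0 \<longleftrightarrow> a = 0 \<and> b = 0 \<and> c = 0"
proof
  assume "lam_comb (of_rat a) (of_rat b) (of_rat c) = 0"
  then have "lam_norm (of_rat a) (of_rat b) (of_rat c) = (0::real)"
    using lam_comb_mult_adj[of "of_rat a" "of_rat b" "of_rat c"] by simp
  then show "a = 0 \<and> b = 0 \<and> c = 0"
    unfolding lam_norm_of_rat by (intro lam_norm_rat_eq_0) simp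
qed (simp add: lam_comb_def)

lemma lam_comb_rat_eq_iff:
  "lam_comb (of_rat a) (of_rat b) (of_rat c) = lam_comb (of_rat a') (of_rat b') (of_rat c')
     \<longleftrightarrow> a = a' \<and> b = b' \<and> c = c'"
proof -
  have "lam_comb (of_rat a) (of_rat b) (of_rat c) - lam_comb (of_rat a') (of_rat b') (of_rat c')
      = lam_comb (of_rat (a - a')) (of_rat (b - b')) (of_rat (c - c'))"
    by (simp add: lam_comb_diff of_rat_diff)
  then show ?thesis
    using lam_comb_rat_eq_0_iff[of "a - a'" "b - b'" "c - c'"] by auto
qed

lemma inverse_lam_comb_rat:
  "\<exists>a' b' c'. inverse (lam_comb (of_rat a) (of_rat b) (of_rat c)) = lam_comb (of_rat a') (of_rat b') (of_rat c')"
proof (cases "a = 0 \<and> b = 0 \<and> c = 0")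
  case True
  then have "inverse (lam_comb (of_rat a) (of_rat b) (of_rat c)) = lam_comb (of_rat 0) (of_rat 0) (of_rat 0)"
    by (simp add: lam_comb_def)
  then show ?thesis
    by blast
next
  case False
  define N where "N = lam_norm a b c"
  define u v w where "u = (a - c) * (a - b) - (2*c - b) * (b - c)"
    and "v = (2*c - b) * c - b * (a - b)" and "w = b * (b - c) - (a - c) * c"
  have "N \<noteq> 0"
    using lam_norm_rat_eq_0[of a b c] False unfolding N_def by blast
  have "lam_comb (of_rat a) (of_rat b) (of_rat c) * lam_comb (of_rat u) (of_rat v) (of_rat w) = of_rat N"
    using lam_comb_mult_adj[of "of_rat a" "of_rat b" "of_rat c"]
    by (simp add: u_def v_def w_def N_def lam_norm_of_rat of_rat_diff of_rat_mult)
  moreover have "lam_comb (of_rat (u / N)) (of_rat (v / N)) (of_rat (w / N))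
      = of_rat (inverse N) * lam_comb (of_rat u) (of_rat v) (of_rat w)"
    unfolding lam_comb_scale by (simp add: divide_inverse of_rat_mult mult.commute)
  ultimately have "lam_comb (of_rat a) (of_rat b) (of_rat c)
      * lam_comb (of_rat (u / N)) (of_rat (v / N)) (of_rat (w / N)) = 1"
    using \<open>N \<noteq> 0\<close> by (simp add: mult.left_commute of_rat_inverse)
  then show ?thesis
    by (intro exI) (rule inverse_unique)
qed

lemma coords_lam_comb: "coords (lam_comb (of_rat r0) (of_rat r1) (of_rat r2)) = (r0, r1, r2)"
  unfolding coords_def
proof (rule the_equality)
  fix s assume "case s of (s0, s1, s2) \<Rightarrow>
    lam_comb (of_rat r0) (of_rat r1) (of_rat r2) = of_rat s0 + of_rat s1 * lam + of_rat s2 * lam ^ 2"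
  then show "s = (r0, r1, r2)"
    by (cases s) (auto simp flip: lam_comb_def simp: lam_comb_rat_eq_iff)
qed (simp add: lam_comb_def)

lemma Pi_f_lam_comb:
  "Pi_f (lam_comb (of_rat r0) (of_rat r1) (of_rat r2))
     = lam_comb (of_rat (frac r0)) (of_rat (frac r1)) (of_rat (frac r2))"
  unfolding Pi_f_def coords_lam_comb by (simp add: lam_comb_def)

lemma in_Qlam_iff: "in_Qlam x \<longleftrightarrow> (\<exists>r0 r1 r2. x = lam_comb (of_rat r0) (of_rat r1) (of_rat r2))"
  by (simp add: in_Qlam_def lam_comb_def)

lemma in_Qlam_mult:
  assumes "in_Qlam x" "in_Qlam y"
  shows "in_Qlam (x * y)"
proof -
  obtain a b c d e f where "x = lam_comb (of_rat a) (of_rat b) (of_rat c)" "y = lam_comb (of_rat d) (of_rat e) (of_rat f)"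
    using assms by (auto simp: in_Qlam_iff)
  then have "x * y = lam_comb (of_rat (a*d + b*f + c*e - c*f)) (of_rat (a*e + b*d - b*f - c*e + 2*c*f))
      (of_rat (a*f + b*e + c*d - b*f - c*e))"
    by (simp add: lam_comb_mult of_rat_add of_rat_diff of_rat_mult)
  then show ?thesis
    unfolding in_Qlam_iff by blast
qed

lemma in_Qlam_inverse: "in_Qlam x \<Longrightarrow> in_Qlam (inverse x)"
  using inverse_lam_comb_rat unfolding in_Qlam_iff by blast

definition Zlam :: "real set" where
  "Zlam = {lam_comb (of_int a) (of_int b) (of_int c) | a b c. True}"

lemma Zlam_mult:
  assumes "x \<in> Zlam" "y \<in> Zlam"
  shows "x * y \<in> Zlam"
proof -
  obtain a b c d e f where "x = lam_comb (of_int a) (of_int b) (of_int c)" "y = lam_comb (of_int d) (of_int e) (of_int f)"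
    using assms by (auto simp: Zlam_def)
  then have "x * y = lam_comb (of_int (a*d + b*f + c*e - c*f)) (of_int (a*e + b*d - b*f - c*e + 2*c*f))
      (of_int (a*f + b*e + c*d - b*f - c*e))"
    by (simp add: lam_comb_mult)
  then show ?thesis
    unfolding Zlam_def by blast
qed

lemma of_int_in_Zlam: "of_int k \<in> Zlam"
proof -
  have "of_int k = lam_comb (of_int k) (of_int 0) (of_int 0)"
    by (simp add: lam_comb_def)
  then show ?thesis
    unfolding Zlam_def by blast
qed

lemma Zlam_add: "x \<in> Zlam \<Longrightarrow> y \<in> Zlam \<Longrightarrow> x + y \<in> Zlam"
  and Zlam_diff: "x \<in> Zlam \<Longrightarrow> y \<in> Zlam \<Longrightarrow> x - y \<in> Zlam"
  unfolding Zlam_def by (auto simp: lam_comb_add lam_comb_diff) (metis of_int_add, metis of_int_diff)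

lemma Zlam_uminus: "x \<in> Zlam \<Longrightarrow> - x \<in> Zlam"
  using Zlam_diff[OF of_int_in_Zlam[of 0]] by simp

lemma Zlam_power: "x \<in> Zlam \<Longrightarrow> x ^ n \<in> Zlam"
  by (induction n) (auto intro: Zlam_mult of_int_in_Zlam[of 1, simplified])

lemma omega_in_Zlam: "omega \<in> Zlam"
  and inverse_omega_in_Zlam: "inverse omega \<in> Zlam"
proof -
  have "omega = lam_comb (of_int 1) (of_int (-1)) (of_int (-1))"
    by (simp add: omega_eq)
  then show "omega \<in> Zlam"
    unfolding Zlam_def by blast
  have "lam_comb 4 3 2 * omega = 1"
    by (simp add: omega_eq lam_comb_mult lam_comb_const)
  then have "inverse omega = lam_comb (of_int 4) (of_int 3) (of_int 2)"
    by (simp add: inverse_unique mult.commute)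
  then show "inverse omega \<in> Zlam"
    unfolding Zlam_def by blast
qed

lemma Zlam_in_Qlam:
  assumes "x \<in> Zlam"
  shows "in_Qlam x"
proof -
  obtain a b c where "x = lam_comb (of_int a) (of_int b) (of_int c)"
    using assms by (auto simp: Zlam_def)
  then have "x = lam_comb (of_rat (of_int a)) (of_rat (of_int b)) (of_rat (of_int c))"
    by simp
  then show ?thesis
    unfolding in_Qlam_iff by blast
qed

text \<open>Since \<^term>\<open>omega\<close> is a unit of \<open>\<int>[\<lambda>]\<close>, its powers are periodic modulo \<open>q\<close>.\<close>
lemma omega_power_cong_1:
  assumes "0 < q"
  shows "\<exists>n\<ge>2. \<exists>z\<in>Zlam. omega ^ n - 1 = of_int q * z"
proof -
  have "\<forall>k. \<exists>a b c. omega ^ (2 * k) = lam_comb (of_int a) (of_int b) (of_int c)"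
    using Zlam_power[OF omega_in_Zlam] by (auto simp: Zlam_def)
  then obtain a b c where abc: "\<And>k. omega ^ (2 * k) = lam_comb (of_int (a k)) (of_int (b k)) (of_int (c k))"
    by metis
  define r where "r k = (a k mod q, b k mod q, c k mod q)" for k
  have "range r \<subseteq> {0..<q} \<times> {0..<q} \<times> {0..<q}"
    using assms by (auto simp: r_def)
  then have "\<not> inj r"
    using finite_subset infinite_UNIV_nat finite_imageD by blast
  then obtain i j where "r i = r j" "i < j"
    unfolding inj_def by (metis linorder_neqE_nat)
  then have "a j mod q = a i mod q" "b j mod q = b i mod q" "c j mod q = c i mod q"
    by (simp_all add: r_def)
  then have "q dvd a j - a i" "q dvd b j - b i" "q dvd c j - c i"
    by (simp_all add: mod_eq_dvd_iff)
  then obtain u v w where "a j - a i = q * u" "b j - b i = q * v" "c j - c i = q * w"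
    by (auto elim!: dvdE)
  then have "omega ^ (2 * j) - omega ^ (2 * i) = of_int q * lam_comb (of_int u) (of_int v) (of_int w)"
    unfolding abc lam_comb_diff lam_comb_scale by (simp flip: of_int_diff of_int_mult)
  moreover have "omega ^ (2 * (j - i)) - 1 = inverse omega ^ (2 * i) * (omega ^ (2 * j) - omega ^ (2 * i))"
  proof -
    have "2 * j = 2 * i + 2 * (j - i)"
      using \<open>i < j\<close> by simp
    then have "omega ^ (2 * j) = omega ^ (2 * i) * omega ^ (2 * (j - i))"
      by (metis power_add)
    moreover have "inverse omega ^ (2 * i) * omega ^ (2 * i) = 1"
      using omega_bounds by (simp add: power_inverse)
    ultimately show ?thesis
      by (simp add: right_diff_distrib mult.assoc[symmetric])
  qed
  ultimately have "omega ^ (2 * (j - i)) - 1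
      = of_int q * (inverse omega ^ (2 * i) * lam_comb (of_int u) (of_int v) (of_int w))"
    by (simp add: mult_ac)
  moreover have "inverse omega ^ (2 * i) * lam_comb (of_int u) (of_int v) (of_int w) \<in> Zlam"
    by (intro Zlam_mult Zlam_power inverse_omega_in_Zlam) (auto simp: Zlam_def)
  moreover have "2 \<le> 2 * (j - i)"
    using \<open>i < j\<close> by simp
  ultimately show ?thesis
    by blast
qed

section \<open>The tiling by digit intervals\<close>

lemma tau_eq: "tau j = [lam_comb 0 1 1, lam_comb (-1) 3 0, lam_comb 0 1 (-1), lam_comb (-1) 2 1,
    lam_comb 1 (-1) (-1), lam_comb 0 1 (-1), lam_comb 0 (-1) 0] ! j"
  by (simp add: tau_def tau_list_def lam_comb_def)

definition valid_digit :: "nat \<times> nat \<Rightarrow> bool" where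
  "valid_digit s \<longleftrightarrow> fst s \<le> 6 \<and> snd s < nu (fst s)"

definition state_of :: "nat \<times> nat \<Rightarrow> nat" where
  "state_of s = p (fst s) (snd s)"

text \<open>
  The state intervals \<open>[cut i, cut (i + 1))\<close>, \<open>i \<le> 6\<close>, partition \<open>[0, 1)\<close>. The digit
  \<open>s = (j, t)\<close> maps the interval of state \<open>j\<close> by \<open>x \<mapsto> digit s + \<omega> x\<close> onto its tile
  \<open>[tile_lo s, tile_hi s)\<close> inside the interval of state \<open>state_of s\<close>, and only
  \<open>last_digit i\<close> reaches the right end of the interval of state \<open>i\<close>. The list \<open>tile_order\<close>
  enumerates the 61 tiles from left to right; consecutive tiles abut.
\<close>

definition cut :: "nat \<Rightarrow> real" where
  "cut i = [lam_comb 0 0 0, lam_comb 1 (-1) (-1), lam_comb 1 (-2) 1, lam_comb (3/2) (-2) (-1/2),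
    lam_comb (1/2) 0 (-1/2), lam_comb (-1/2) 1 (3/2), lam_comb 0 1 0, lam_comb 1 0 0] ! i"

definition tile_lo :: "nat \<times> nat \<Rightarrow> real" where
  "tile_lo s = digit s + omega * cut (fst s)"

definition tile_hi :: "nat \<times> nat \<Rightarrow> real" where
  "tile_hi s = digit s + omega * cut (Suc (fst s))"

definition last_digit :: "nat \<Rightarrow> nat \<times> nat" where
  "last_digit i = [(6,0), (1,9), (2,6), (3,2), (4,6), (5,3), (6,1)] ! i"

definition tile_order :: "(nat \<times> nat) list" where
  "tile_order = [(0,0), (1,0), (2,0), (3,0), (4,0), (5,0), (6,0), (1,4), (2,4), (3,4), (5,8), (1,9),
    (2,9), (4,5), (5,5), (1,6), (2,6), (3,6), (5,10), (1,11), (0,2), (1,2), (2,2), (3,2), (4,2),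
    (5,2), (6,2), (2,10), (4,6), (5,6), (1,7), (2,7), (4,3), (5,3), (6,3), (2,11), (4,7), (3,7),
    (5,11), (1,12), (0,3), (1,3), (2,3), (3,3), (5,7), (1,8), (2,8), (4,4), (5,4), (1,5), (2,5),
    (3,5), (5,9), (1,10), (0,1), (1,1), (2,1), (3,1), (4,1), (5,1), (6,1)]"

definition digit_fits :: "nat \<times> nat \<Rightarrow> bool" where
  "digit_fits s \<longleftrightarrow> 0 \<le> digit s \<and> digit s \<le> 1 \<and> state_of s \<le> 6
     \<and> cut (state_of s) \<le> tile_lo s
     \<and> (if s = last_digit (state_of s) then tile_hi s = cut (Suc (state_of s))
        else tile_hi s < cut (Suc (state_of s)))
     \<and> s \<in> set tile_order"

lemma lam_comb_le_1_iff: "lam_comb a b c \<le> 1 \<longleftrightarrow> 0 \<le> lam_comb (1 - a) (- b) (- c)"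
  by (simp add: lam_comb_def algebra_simps)

lemma digit_0: "digit (j, 0) = lam_comb 0 0 0" and digit_Suc: "digit (j, Suc t) = digit (j, t) + tau (p j t)"
  by (simp_all add: digit_def lam_comb_def)

lemmas table_simps = numeral_eq_Suc digit_0 digit_Suc tau_eq p_def path_list_def cut_def
  last_digit_def tile_order_def tile_lo_def tile_hi_def state_of_def omega_mult lam_comb_add
  lam_comb_le_1_iff lam_comb_sign_simps

lemma valid_digit_fits: "valid_digit s \<Longrightarrow> digit_fits s"
proof -
  have "\<forall>j<7. \<forall>t<nu j. digit_fits (j, t)"
    unfolding digit_fits_def by (simp add: nu_def All_less_Suc table_simps)
  then show "valid_digit s \<Longrightarrow> digit_fits s"
    by (cases s) (auto simp: valid_digit_def)
qed

lemma tiles_adjacent: "k < 60 \<Longrightarrow> tile_hi (tile_order ! k) = tile_lo (tile_order ! Suc k)"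
proof -
  have "\<forall>k<60. tile_hi (tile_order ! k) = tile_lo (tile_order ! Suc k)"
    by (simp add: All_less_Suc table_simps)
  then show "k < 60 \<Longrightarrow> ?thesis" by blast
qed

lemma cut_bounds: "i \<le> 7 \<Longrightarrow> 0 \<le> cut i \<and> cut i \<le> 1"
proof -
  have "\<forall>i<8. 0 \<le> cut i \<and> cut i \<le> 1"
    by (simp add: All_less_Suc numeral_eq_Suc cut_def lam_comb_le_1_iff lam_comb_sign_simps)
  then show "i \<le> 7 \<Longrightarrow> ?thesis" by simp
qed

lemma cut_mono: "i \<le> 6 \<Longrightarrow> cut i \<le> cut (Suc i)"
proof -
  have "\<forall>i<7. cut i \<le> cut (Suc i)"
    by (simp add: All_less_Suc numeral_eq_Suc cut_def lam_comb_sign_simps)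
  then show "i \<le> 6 \<Longrightarrow> ?thesis" by simp
qed

lemma last_digit_facts:
  assumes "i \<le> 6"
  shows "1 \<le> fst (last_digit i)" and "1 \<le> i \<Longrightarrow> fst (last_digit i) = i \<and> last_digit i \<in> excluded_tails"
proof -
  have "\<forall>i<7. 1 \<le> fst (last_digit i) \<and> (1 \<le> i \<longrightarrow> fst (last_digit i) = i \<and> last_digit i \<in> excluded_tails)"
    by (simp add: All_less_Suc numeral_eq_Suc last_digit_def excluded_tails_def)
  then show "1 \<le> fst (last_digit i)" and "1 \<le> i \<Longrightarrow> fst (last_digit i) = i \<and> last_digit i \<in> excluded_tails"
    using assms by auto
qed

lemma tile_order_facts: "length tile_order = 61" "s \<in> set tile_order \<Longrightarrow> fst s \<le> 6"
  by (auto simp: tile_order_def)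

lemma tile_lo_le_hi: "fst s \<le> 6 \<Longrightarrow> tile_lo s \<le> tile_hi s"
  using cut_mono omega_bounds by (simp add: tile_lo_def tile_hi_def)

lemma tile_order_sorted:
  assumes "k < k'" "k' < 61"
  shows "tile_hi (tile_order ! k) \<le> tile_lo (tile_order ! k')"
  using assms
proof (induction k')
  case (Suc m)
  have "tile_hi (tile_order ! m) = tile_lo (tile_order ! Suc m)"
    using Suc.prems by (intro tiles_adjacent) simp
  moreover have "tile_hi (tile_order ! k) \<le> tile_hi (tile_order ! m)" if "k < m"
  proof -
    have "tile_order ! m \<in> set tile_order"
      using Suc.prems tile_order_facts(1) by simp
    then have "tile_lo (tile_order ! m) \<le> tile_hi (tile_order ! m)"
      by (intro tile_lo_le_hi tile_order_facts(2))
    then show ?thesis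
      using Suc.IH that Suc.prems by fastforce
  qed
  ultimately show ?case
    using Suc.prems by (cases "k = m") auto
qed simp

lemma tiles_disjoint:
  assumes "valid_digit s" "valid_digit s'"
    and "tile_lo s \<le> x" "x < tile_hi s" "tile_lo s' \<le> x" "x < tile_hi s'"
  shows "s = s'"
proof -
  obtain k k' where k: "k < 61" "s = tile_order ! k" and k': "k' < 61" "s' = tile_order ! k'"
    using valid_digit_fits[OF assms(1)] valid_digit_fits[OF assms(2)] tile_order_facts(1)
    by (auto simp: digit_fits_def in_set_conv_nth)
  have "\<not> k < k'" and "\<not> k' < k"
    using tile_order_sorted[of k k'] tile_order_sorted[of k' k] k k' assms(3-6) by auto
  then show ?thesis
    using k k' by simp
qed

section \<open>Codes and the scaling map\<close>

definition is_path :: "(nat \<Rightarrow> nat \<times> nat) \<Rightarrow> bool" where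
  "is_path \<sigma> \<longleftrightarrow> (\<forall>k. valid_digit (\<sigma> k) \<and> state_of (\<sigma> (Suc k)) = fst (\<sigma> k))"

definition sdrop :: "nat \<Rightarrow> (nat \<Rightarrow> 'a) \<Rightarrow> nat \<Rightarrow> 'a" where
  "sdrop k \<sigma> = (\<lambda>i. \<sigma> (i + k))"

lemma sdrop_0 [simp]: "sdrop 0 \<sigma> = \<sigma>"
  and sdrop_apply: "sdrop k \<sigma> i = \<sigma> (i + k)"
  and sdrop_apply_0 [simp]: "sdrop k \<sigma> 0 = \<sigma> k"
  and sdrop_sdrop [simp]: "sdrop k (sdrop m \<sigma>) = sdrop (k + m) \<sigma>"
  by (simp_all add: sdrop_def add.assoc)

lemma V_iff: "\<sigma> \<in> V \<longleftrightarrow> is_path \<sigma> \<and> \<not> (\<exists>a\<in>excluded_tails. \<exists>m. \<forall>k\<ge>m. \<sigma> k = a)"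
  unfolding V_def is_path_def valid_digit_def state_of_def by (auto simp: eq_commute)

lemma is_path_sdrop: "is_path \<sigma> \<Longrightarrow> is_path (sdrop k \<sigma>)"
  by (simp add: is_path_def sdrop_apply)

lemma V_sdrop:
  assumes "\<sigma> \<in> V"
  shows "sdrop k \<sigma> \<in> V"
  unfolding V_iff
proof (intro conjI notI)
  show "is_path (sdrop k \<sigma>)"
    using assms by (simp add: V_iff is_path_sdrop)
  assume "\<exists>a\<in>excluded_tails. \<exists>m. \<forall>i\<ge>m. sdrop k \<sigma> i = a"
  then obtain a m where a: "a \<in> excluded_tails" "\<forall>i\<ge>m. \<sigma> (i + k) = a"
    by (auto simp: sdrop_apply)
  have "\<forall>i\<ge>m + k. \<sigma> i = a"
  proof (intro allI impI)
    fix i assume "m + k \<le> i"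
    then show "\<sigma> i = a"
      using a(2)[rule_format, of "i - k"] by simp
  qed
  then show False
    using assms a(1) unfolding V_iff by blast
qed

lemma is_path_fits: "is_path \<sigma> \<Longrightarrow> digit_fits (\<sigma> k)"
  by (simp add: is_path_def valid_digit_fits)

lemma summable_digits:
  assumes "is_path \<sigma>"
  shows "summable (\<lambda>i. digit (\<sigma> i) * omega ^ i)"
proof (rule summable_comparison_test')
  show "summable (\<lambda>i. omega ^ i)"
    using omega_bounds by (intro summable_geometric) simp
  show "norm (digit (\<sigma> i) * omega ^ i) \<le> omega ^ i" for i
    using is_path_fits[OF assms, of i] omega_bounds
    by (simp add: digit_fits_def abs_mult mult_left_le_one_le)
qed

lemma xval_unfold:
  assumes "is_path \<sigma>"
  shows "xval \<sigma> = digit (\<sigma> 0) + omega * xval (sdrop 1 \<sigma>)"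
proof -
  have "xval \<sigma> = (\<Sum>i. digit (\<sigma> (Suc i)) * omega ^ Suc i) + digit (\<sigma> 0)"
    unfolding xval_def using suminf_split_head[OF summable_digits[OF assms]] by simp
  also have "(\<Sum>i. digit (\<sigma> (Suc i)) * omega ^ Suc i) = omega * xval (sdrop 1 \<sigma>)"
    unfolding xval_def
    using suminf_mult[OF summable_digits[OF is_path_sdrop[OF assms, of 1]], of omega]
    by (simp add: sdrop_apply mult_ac)
  finally show ?thesis
    by simp
qed

lemma xval_bounds:
  assumes "is_path \<sigma>"
  shows "0 \<le> xval \<sigma>" "xval \<sigma> \<le> 2"
proof -
  have digits: "0 \<le> digit (\<sigma> i)" "digit (\<sigma> i) \<le> 1" for i
    using is_path_fits[OF assms] by (simp_all add: digit_fits_def)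
  show "0 \<le> xval \<sigma>"
    unfolding xval_def using digits omega_bounds
    by (intro suminf_nonneg summable_digits assms) simp
  have "xval \<sigma> \<le> (\<Sum>i. omega ^ i)"
    unfolding xval_def using digits omega_bounds
    by (intro suminf_le summable_digits assms summable_geometric)
      (auto simp: mult_left_le_one_le)
  also have "\<dots> = 1 / (1 - omega)"
    using omega_bounds by (intro suminf_geometric) simp
  also have "\<dots> \<le> 2"
    using omega_bounds by (simp add: field_simps)
  finally show "xval \<sigma> \<le> 2" .
qed

lemma digit_fits_tile:
  assumes "digit_fits s"
  shows "state_of s \<le> 6" "cut (state_of s) \<le> tile_lo s" "tile_hi s \<le> cut (Suc (state_of s))"
    and "tile_hi s = cut (Suc (state_of s)) \<Longrightarrow> s = last_digit (state_of s)"
  using assms by (auto simp: digit_fits_def split: if_splits)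

lemma is_path_state_Suc: "is_path \<sigma> \<Longrightarrow> state_of (\<sigma> (Suc k)) = fst (\<sigma> k)"
  by (simp add: is_path_def)

lemma xval_near_state_interval:
  assumes "is_path \<sigma>"
  shows "cut (state_of (\<sigma> 0)) - 3 * omega ^ n \<le> xval \<sigma>
    \<and> xval \<sigma> \<le> cut (Suc (state_of (\<sigma> 0))) + 3 * omega ^ n"
  using assms
proof (induction n arbitrary: \<sigma>)
  case 0
  have "state_of (\<sigma> 0) \<le> 6"
    using digit_fits_tile(1)[OF is_path_fits[OF 0]] .
  then show ?case
    using xval_bounds[OF 0] cut_bounds[of "state_of (\<sigma> 0)"] cut_bounds[of "Suc (state_of (\<sigma> 0))"]
    by simp
next
  case (Suc n)
  let ?\<rho> = "sdrop 1 \<sigma>"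
  have "state_of (?\<rho> 0) = fst (\<sigma> 0)"
    using is_path_state_Suc[OF Suc.prems, of 0] by simp
  then have "cut (fst (\<sigma> 0)) - 3 * omega ^ n \<le> xval ?\<rho>"
    and "xval ?\<rho> \<le> cut (Suc (fst (\<sigma> 0))) + 3 * omega ^ n"
    using Suc.IH[OF is_path_sdrop[OF Suc.prems, of 1]] by auto
  then have "omega * cut (fst (\<sigma> 0)) - 3 * omega ^ Suc n \<le> omega * xval ?\<rho>"
    and "omega * xval ?\<rho> \<le> omega * cut (Suc (fst (\<sigma> 0))) + 3 * omega ^ Suc n"
    using mult_left_mono[OF _ less_imp_le[OF omega_bounds(1)]]
    by (fastforce simp: algebra_simps)+
  moreover have "cut (state_of (\<sigma> 0)) \<le> tile_lo (\<sigma> 0)" "tile_hi (\<sigma> 0) \<le> cut (Suc (state_of (\<sigma> 0)))"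
    using digit_fits_tile[OF is_path_fits[OF Suc.prems]] by auto
  ultimately show ?case
    unfolding tile_lo_def tile_hi_def xval_unfold[OF Suc.prems] by linarith
qed

lemma xval_in_state_interval:
  assumes "is_path \<sigma>"
  shows "cut (state_of (\<sigma> 0)) \<le> xval \<sigma>" "xval \<sigma> \<le> cut (Suc (state_of (\<sigma> 0)))"
proof -
  have "(\<lambda>n. 3 * omega ^ n) \<longlonglongrightarrow> 3 * 0"
    using omega_bounds by (intro tendsto_mult tendsto_const LIMSEQ_power_zero) simp_all
  then have lo: "(\<lambda>n. cut (state_of (\<sigma> 0)) - 3 * omega ^ n) \<longlonglongrightarrow> cut (state_of (\<sigma> 0))"
    and hi: "(\<lambda>n. cut (Suc (state_of (\<sigma> 0))) + 3 * omega ^ n) \<longlonglongrightarrow> cut (Suc (state_of (\<sigma> 0)))"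
    using tendsto_diff[OF tendsto_const] tendsto_add[OF tendsto_const] by fastforce+
  show "cut (state_of (\<sigma> 0)) \<le> xval \<sigma>"
    using xval_near_state_interval[OF assms] by (intro LIMSEQ_le_const2[OF lo]) auto
  show "xval \<sigma> \<le> cut (Suc (state_of (\<sigma> 0)))"
    using xval_near_state_interval[OF assms] by (intro LIMSEQ_le_const[OF hi]) auto
qed

text \<open>A code reaching the right end of its state interval must use the last digit there, and
  so must its shift; this is what forces one of the excluded tails.\<close>
lemma xval_eq_right_end:
  assumes "is_path \<sigma>" "xval \<sigma> = cut (Suc (state_of (\<sigma> 0)))"
  shows "\<sigma> 0 = last_digit (state_of (\<sigma> 0))" "xval (sdrop 1 \<sigma>) = cut (Suc (fst (\<sigma> 0)))"
proof -
  have "state_of (sdrop 1 \<sigma> 0) = fst (\<sigma> 0)"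
    using is_path_state_Suc[OF assms(1), of 0] by simp
  then have "omega * xval (sdrop 1 \<sigma>) \<le> omega * cut (Suc (fst (\<sigma> 0)))"
    using xval_in_state_interval(2)[OF is_path_sdrop[OF assms(1), of 1]] omega_bounds
    by (intro mult_left_mono) auto
  moreover have "tile_hi (\<sigma> 0) \<le> cut (Suc (state_of (\<sigma> 0)))"
    using digit_fits_tile[OF is_path_fits[OF assms(1)]] by simp
  ultimately have "tile_hi (\<sigma> 0) = cut (Suc (state_of (\<sigma> 0)))"
    and eq: "omega * xval (sdrop 1 \<sigma>) = omega * cut (Suc (fst (\<sigma> 0)))"
    using assms(2) xval_unfold[OF assms(1)] unfolding tile_hi_def by linarith+
  then show "\<sigma> 0 = last_digit (state_of (\<sigma> 0))"
    using digit_fits_tile(4)[OF is_path_fits[OF assms(1)]] by simp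
  show "xval (sdrop 1 \<sigma>) = cut (Suc (fst (\<sigma> 0)))"
    using eq omega_bounds by simp
qed

lemma xval_less_right_end:
  assumes "\<sigma> \<in> V"
  shows "xval \<sigma> < cut (Suc (state_of (\<sigma> 0)))"
proof (rule ccontr)
  have path: "is_path \<sigma>"
    using assms by (simp add: V_iff)
  assume "\<not> ?thesis"
  then have "xval \<sigma> = cut (Suc (state_of (\<sigma> 0)))"
    using xval_in_state_interval(2)[OF path] by simp
  then have right_end: "xval (sdrop k \<sigma>) = cut (Suc (state_of (\<sigma> k)))" for k
  proof (induction k)
    case (Suc k)
    then show ?case
      using xval_eq_right_end(2)[OF is_path_sdrop[OF path, of k]] is_path_state_Suc[OF path, of k]
      by simp
  qed simp
  have last: "\<sigma> k = last_digit (state_of (\<sigma> k))" for k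
    using xval_eq_right_end(1)[OF is_path_sdrop[OF path, of k]] right_end[of k]
    by simp
  define i where "i = fst (\<sigma> 0)"
  have "i \<le> 6"
    using path by (simp add: is_path_def valid_digit_def i_def)
  have "1 \<le> i"
    using last[of 0] last_digit_facts(1) digit_fits_tile(1)[OF is_path_fits[OF path]]
    unfolding i_def by metis
  have "fst (\<sigma> k) = i" for k
  proof (induction k)
    case (Suc k)
    then show ?case
      using last[of "Suc k"] is_path_state_Suc[OF path, of k] last_digit_facts(2)[OF \<open>i \<le> 6\<close> \<open>1 \<le> i\<close>]
      by simp
  qed (simp add: i_def)
  then have tail: "\<sigma> (Suc k) = last_digit i" for k
    using last[of "Suc k"] is_path_state_Suc[OF path, of k] by simp
  have "\<forall>k\<ge>1. \<sigma> k = last_digit i"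
  proof (intro allI impI)
    fix k :: nat
    assume "1 \<le> k"
    then obtain m where "k = Suc m"
      by (cases k) auto
    then show "\<sigma> k = last_digit i"
      using tail by simp
  qed
  moreover have "last_digit i \<in> excluded_tails"
    using last_digit_facts(2)[OF \<open>i \<le> 6\<close> \<open>1 \<le> i\<close>] by simp
  ultimately show False
    using assms unfolding V_iff by blast
qed

lemma xval_in_tile:
  assumes "\<sigma> \<in> V"
  shows "tile_lo (\<sigma> 0) \<le> xval \<sigma>" "xval \<sigma> < tile_hi (\<sigma> 0)"
proof -
  have path: "is_path \<sigma>"
    using assms by (simp add: V_iff)
  have "state_of (sdrop 1 \<sigma> 0) = fst (\<sigma> 0)"
    using is_path_state_Suc[OF path, of 0] by simp
  then have "cut (fst (\<sigma> 0)) \<le> xval (sdrop 1 \<sigma>)" "xval (sdrop 1 \<sigma>) < cut (Suc (fst (\<sigma> 0)))"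
    using xval_in_state_interval(1)[OF is_path_sdrop[OF path, of 1]]
      xval_less_right_end[OF V_sdrop[OF assms, of 1]]
    by auto
  then have "omega * cut (fst (\<sigma> 0)) \<le> omega * xval (sdrop 1 \<sigma>)"
    "omega * xval (sdrop 1 \<sigma>) < omega * cut (Suc (fst (\<sigma> 0)))"
    using omega_bounds by auto
  then show "tile_lo (\<sigma> 0) \<le> xval \<sigma>" "xval \<sigma> < tile_hi (\<sigma> 0)"
    unfolding tile_lo_def tile_hi_def xval_unfold[OF path] by simp_all
qed

lemma V_valid_digit: "\<sigma> \<in> V \<Longrightarrow> valid_digit (\<sigma> k)"
  by (simp add: V_iff is_path_def)

lemma xval_eq_imp_first_digit_eq:
  assumes "\<sigma> \<in> V" "\<tau> \<in> V" "xval \<sigma> = xval \<tau>"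
  shows "\<sigma> 0 = \<tau> 0" "xval (sdrop 1 \<sigma>) = xval (sdrop 1 \<tau>)"
proof -
  show "\<sigma> 0 = \<tau> 0"
    using xval_in_tile[OF assms(1)] xval_in_tile[OF assms(2)] assms(3)
    by (intro tiles_disjoint[of _ _ "xval \<sigma>"] V_valid_digit assms(1,2)) auto
  then show "xval (sdrop 1 \<sigma>) = xval (sdrop 1 \<tau>)"
    using assms(3) omega_bounds xval_unfold[of \<sigma>] xval_unfold[of \<tau>] assms(1,2)
    by (simp add: V_iff)
qed

lemma inj_on_xval: "inj_on xval V"
proof
  fix \<sigma> \<tau> assume "\<sigma> \<in> V" "\<tau> \<in> V" "xval \<sigma> = xval \<tau>"
  have "xval (sdrop k \<sigma>) = xval (sdrop k \<tau>)" for k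
  proof (induction k)
    case (Suc k)
    then show ?case
      using xval_eq_imp_first_digit_eq(2)[OF V_sdrop[OF \<open>\<sigma> \<in> V\<close>] V_sdrop[OF \<open>\<tau> \<in> V\<close>]]
      by simp
  qed (simp add: \<open>xval \<sigma> = xval \<tau>\<close>)
  then show "\<sigma> = \<tau>"
    using xval_eq_imp_first_digit_eq(1)[OF V_sdrop[OF \<open>\<sigma> \<in> V\<close>] V_sdrop[OF \<open>\<tau> \<in> V\<close>]]
    by auto
qed

lemma code_xval: "\<sigma> \<in> V \<Longrightarrow> code (xval \<sigma>) = \<sigma>"
  unfolding code_def using inj_on_xval by (auto dest: inj_onD)

lemma gamma_xval: "\<sigma> \<in> V \<Longrightarrow> gamma (xval \<sigma>) = xval (sdrop 1 \<sigma>)"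
  unfolding gamma_def code_xval using xval_unfold omega_bounds by (simp add: V_iff)

lemma funpow_gamma_xval: "\<sigma> \<in> V \<Longrightarrow> (gamma ^^ k) (xval \<sigma>) = xval (sdrop k \<sigma>)"
  by (induction k) (simp_all add: gamma_xval V_sdrop)

lemma xval_range:
  assumes "\<sigma> \<in> V"
  shows "xval \<sigma> \<in> {0..<1}"
proof -
  have path: "is_path \<sigma>"
    using assms by (simp add: V_iff)
  then have "state_of (\<sigma> 0) \<le> 6"
    using digit_fits_tile(1)[OF is_path_fits] by blast
  then have "0 \<le> cut (state_of (\<sigma> 0))" "cut (Suc (state_of (\<sigma> 0))) \<le> 1"
    using cut_bounds by simp_all
  then show ?thesis
    using xval_in_state_interval(1)[OF path] xval_less_right_end[OF assms] by simp
qed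

lemma periodic_point_xval:
  assumes "\<sigma> \<in> V" "1 \<le> n" "\<And>i. \<sigma> (i + n) = \<sigma> i"
  shows "periodic_point (xval \<sigma>)"
proof -
  have "sdrop n \<sigma> = \<sigma>"
    using assms(3) by (simp add: sdrop_def)
  then have "(gamma ^^ n) (xval \<sigma>) = xval \<sigma>"
    using funpow_gamma_xval[OF assms(1), of n] by simp
  then show ?thesis
    unfolding periodic_point_def using xval_range[OF assms(1)] assms(2) by blast
qed

lemma xval_periodic:
  assumes "is_path \<sigma>" "\<And>i. \<sigma> (i + n) = \<sigma> i"
  shows "xval \<sigma> * (1 - omega ^ n) = (\<Sum>i<n. digit (\<sigma> i) * omega ^ i)"
proof -
  have "xval \<sigma> = (\<Sum>i. digit (\<sigma> (i + n)) * omega ^ (i + n)) + (\<Sum>i<n. digit (\<sigma> i) * omega ^ i)"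
    unfolding xval_def by (rule suminf_split_initial_segment[OF summable_digits[OF assms(1)]])
  also have "(\<lambda>i. digit (\<sigma> (i + n)) * omega ^ (i + n)) = (\<lambda>i. digit (\<sigma> i) * omega ^ i * omega ^ n)"
    by (simp add: assms(2) power_add mult.assoc)
  also have "(\<Sum>i. digit (\<sigma> i) * omega ^ i * omega ^ n) = xval \<sigma> * omega ^ n"
    unfolding xval_def by (rule suminf_mult2[OF summable_digits[OF assms(1)], symmetric])
  finally have "xval \<sigma> = xval \<sigma> * omega ^ n + (\<Sum>i<n. digit (\<sigma> i) * omega ^ i)" .
  then show ?thesis
    unfolding right_diff_distrib mult_1_right by linarith
qed

lemma Pi_f_in_Xi:
  assumes "in_Qlam x"
  shows "Pi_f x \<in> Xi"
proof -
  obtain r0 r1 r2 where "x = lam_comb (of_rat r0) (of_rat r1) (of_rat r2)"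
    using assms by (auto simp: in_Qlam_iff)
  then have "Pi_f x = lam_comb (of_rat (frac r0)) (of_rat (frac r1)) (of_rat (frac r2))"
    by (simp add: Pi_f_lam_comb)
  then show ?thesis
    unfolding Xi_def lam_comb_def using frac_ge_0 frac_lt_1 by blast
qed

lemma Pi_f_diff_in_Zlam:
  assumes "in_Qlam x"
  shows "x - Pi_f x \<in> Zlam"
proof -
  obtain r0 r1 r2 where x: "x = lam_comb (of_rat r0) (of_rat r1) (of_rat r2)"
    using assms by (auto simp: in_Qlam_iff)
  have "x - Pi_f x = lam_comb (of_int \<lfloor>r0\<rfloor>) (of_int \<lfloor>r1\<rfloor>) (of_int \<lfloor>r2\<rfloor>)"
    unfolding x Pi_f_lam_comb lam_comb_diff by (simp add: frac_def of_rat_diff)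
  then show ?thesis
    unfolding Zlam_def by blast
qed

lemma Pi_f_add_Zlam:
  assumes "in_Qlam x" "z \<in> Zlam"
  shows "in_Qlam (x + z)" "Pi_f (x + z) = Pi_f x"
proof -
  obtain r0 r1 r2 where x: "x = lam_comb (of_rat r0) (of_rat r1) (of_rat r2)"
    using assms(1) by (auto simp: in_Qlam_iff)
  obtain a b c where z: "z = lam_comb (of_int a) (of_int b) (of_int c)"
    using assms(2) by (auto simp: Zlam_def)
  have xz: "x + z = lam_comb (of_rat (r0 + of_int a)) (of_rat (r1 + of_int b)) (of_rat (r2 + of_int c))"
    unfolding x z lam_comb_add by (simp add: of_rat_add)
  then show "in_Qlam (x + z)"
    unfolding in_Qlam_iff by blast
  show "Pi_f (x + z) = Pi_f x"
    unfolding xz by (simp add: x Pi_f_lam_comb)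
qed

lemma Xi_common_denominator:
  assumes "finite S" "S \<subseteq> Xi"
  shows "\<exists>D::int. 0 < D \<and> (\<forall>\<xi>\<in>S. of_int D * \<xi> \<in> Zlam)"
proof -
  define R where "R = (\<Union>\<xi>\<in>S. {fst (coords \<xi>), fst (snd (coords \<xi>)), snd (snd (coords \<xi>))})"
  obtain D :: int where "0 < D" and D: "\<forall>r\<in>R. of_int D * r \<in> \<int>"
    using common_denominator[of R] assms(1) by (auto simp: R_def)
  have "of_int D * \<xi> \<in> Zlam" if "\<xi> \<in> S" for \<xi>
  proof -
    obtain r0 r1 r2 where \<xi>: "\<xi> = lam_comb (of_rat r0) (of_rat r1) (of_rat r2)"
      using \<open>\<xi> \<in> S\<close> assms(2) unfolding Xi_def lam_comb_def by blast
    then have "coords \<xi> = (r0, r1, r2)"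
      by (simp add: coords_lam_comb)
    then have "r0 \<in> R" "r1 \<in> R" "r2 \<in> R"
      using \<open>\<xi> \<in> S\<close> unfolding R_def by force+
    then obtain a b c where "of_int D * r0 = of_int a" "of_int D * r1 = of_int b" "of_int D * r2 = of_int c"
      using D by (metis Ints_cases)
    then have "of_int D * \<xi> = lam_comb (of_int a) (of_int b) (of_int c)"
      unfolding \<xi> lam_comb_scale by (metis of_rat_mult of_rat_of_int_eq)
    then show ?thesis
      unfolding Zlam_def by blast
  qed
  then show ?thesis
    using \<open>0 < D\<close> by blast
qed

lemma kappa_gt_1:
  assumes "x \<noteq> y" "periodic_point x" "periodic_point y" "in_Qlam x" "in_Qlam y"
    and "Pi_f x = \<xi>" "Pi_f y = \<xi>"
  shows "1 < kappa \<xi>"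
proof -
  define S where "S = {x. periodic_point x \<and> in_Qlam x \<and> Pi_f x = \<xi>}"
  show ?thesis
  proof (cases "finite S")
    case True
    have "{x, y} \<subseteq> S"
      using assms by (auto simp: S_def)
    then have "2 \<le> card S"
      using assms(1) card_mono[OF True, of "{x, y}"] by simp
    then show ?thesis
      using True unfolding kappa_def S_def[symmetric] by (simp add: one_enat_def)
  next
    case False
    then show ?thesis
      unfolding kappa_def S_def[symmetric] by simp
  qed
qed

section \<open>Two families of periodic points\<close>

definition code_a :: "nat \<Rightarrow> nat \<Rightarrow> nat \<times> nat" where
  "code_a n i = (if i mod n = 0 then (2, 6) else (2, 9))"

definition code_b :: "nat \<Rightarrow> nat \<Rightarrow> nat \<times> nat" where
  "code_b n i = (if i mod n = 0 then (3, 0) else if i mod n = 1 then (0, 2) else (0, 0))"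

lemma not_eventually_const:
  fixes n :: nat
  assumes "1 \<le> n" "\<And>m. \<sigma> (m * n) \<noteq> \<sigma> (m * n + 1)"
  shows "\<not> (\<exists>m. \<forall>k\<ge>m. \<sigma> k = a)"
proof
  assume "\<exists>m. \<forall>k\<ge>m. \<sigma> k = a"
  then obtain m where m: "\<forall>k\<ge>m. \<sigma> k = a"
    by blast
  have "m \<le> m * n"
    using mult_le_mono2[OF assms(1), of m] by simp
  then have "m \<le> m * n + 1"
    by linarith
  with \<open>m \<le> m * n\<close> show False
    using m assms(2)[of m] by metis
qed

lemma digits_of_codes:
  "digit (2, 6) = lam_comb (-2) 3 2" "digit (2, 9) = lam_comb (-2) 4 0" "digit (0, 2) = lam_comb 0 0 1"
  "digit (3, 0) = 0" "digit (0, 0) = 0"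
  by (simp_all add: table_simps lam_comb_def)

lemma code_a_in_V:
  assumes "2 \<le> n"
  shows "code_a n \<in> V"
  unfolding V_iff
proof
  show "is_path (code_a n)"
    using assms
    by (auto simp: is_path_def code_a_def valid_digit_def state_of_def nu_def p_def path_list_def mod_Suc)
  show "\<not> (\<exists>a\<in>excluded_tails. \<exists>m. \<forall>k\<ge>m. code_a n k = a)"
    using not_eventually_const[of n "code_a n"] assms by (auto simp: code_a_def mod_Suc)
qed

lemma code_b_in_V:
  assumes "2 \<le> n"
  shows "code_b n \<in> V"
  unfolding V_iff
proof
  show "is_path (code_b n)"
    using assms
    by (auto simp: is_path_def code_b_def valid_digit_def state_of_def nu_def p_def path_list_def mod_Suc)
  show "\<not> (\<exists>a\<in>excluded_tails. \<exists>m. \<forall>k\<ge>m. code_b n k = a)"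
    using not_eventually_const[of n "code_b n"] assms by (auto simp: code_b_def mod_Suc)
qed

lemma code_a_periodic: "code_a n (i + n) = code_a n i"
  and code_b_periodic: "code_b n (i + n) = code_b n i"
  by (simp_all add: code_a_def code_b_def)

lemma xval_code_b: 
  assumes "2 \<le> n"
  shows "xval (code_b n) * (1 - omega ^ n) = lam_comb 0 (-1) 2"
proof -
  have "(\<Sum>i<n. digit (code_b n i) * omega ^ i) = (\<Sum>i<n. if i = 1 then lam_comb 0 0 1 * omega else 0)"
    by (intro sum.cong) (auto simp: code_b_def digits_of_codes)
  also have "\<dots> = lam_comb 0 (-1) 2"
    using assms by (simp add: mult.commute[of _ omega] omega_mult)
  finally show ?thesis
    using xval_periodic[of "code_b n" n, OF _ code_b_periodic] code_b_in_V[OF assms] by (simp add: V_iff)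
qed

lemma xval_code_a:
  assumes "2 \<le> n"
  shows "xval (code_a n) = xval (code_b n) + lam_comb 1 (-2) 1"
proof -
  have "(\<Sum>i<n. digit (code_a n i) * omega ^ i)
      = (\<Sum>i<n. lam_comb (-2) 4 0 * omega ^ i + (if i = 0 then lam_comb 0 (-1) 2 else 0))"
    by (intro sum.cong) (auto simp: code_a_def digits_of_codes lam_comb_add)
  also have "\<dots> = lam_comb (-2) 4 0 * (\<Sum>i<n. omega ^ i) + lam_comb 0 (-1) 2"
    using assms by (simp add: sum.distrib sum_distrib_left)
  also have "lam_comb (-2) 4 0 = lam_comb 1 (-2) 1 * (1 - omega)"
  proof -
    have "1 - omega = lam_comb 0 1 1"
      by (simp add: omega_eq lam_comb_def)
    then show ?thesis
      by (simp add: lam_comb_mult)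
  qed
  also have "lam_comb 1 (-2) 1 * (1 - omega) * (\<Sum>i<n. omega ^ i) = lam_comb 1 (-2) 1 * (1 - omega ^ n)"
    by (simp add: one_diff_power_eq mult.assoc)
  also have "lam_comb 0 (-1) 2 = xval (code_b n) * (1 - omega ^ n)"
    using xval_code_b[OF assms] ..
  finally have "xval (code_a n) * (1 - omega ^ n) = (xval (code_b n) + lam_comb 1 (-2) 1) * (1 - omega ^ n)"
    using xval_periodic[of "code_a n" n, OF _ code_a_periodic] code_a_in_V[OF assms] by (simp add: V_iff algebra_simps)
  moreover have "omega ^ n < 1"
    using omega_bounds assms by (simp add: power_less_one_iff)
  ultimately show ?thesis
    by simp
qed

lemma xval_code_b_in_Qlam:
  assumes "2 \<le> n"
  shows "in_Qlam (xval (code_b n))"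
proof -
  have "omega ^ n < 1"
    using omega_bounds assms by (simp add: power_less_one_iff)
  then have "xval (code_b n) = lam_comb (of_int 0) (of_int (-1)) (of_int 2) * inverse (1 - omega ^ n)"
    using xval_code_b[OF assms] by (simp add: field_simps)
  moreover have "lam_comb (of_int 0) (of_int (-1)) (of_int 2) \<in> Zlam"
    unfolding Zlam_def by blast
  moreover have "1 - omega ^ n \<in> Zlam"
    using Zlam_diff[OF of_int_in_Zlam[of 1] Zlam_power[OF omega_in_Zlam]] by simp
  ultimately show ?thesis
    using in_Qlam_mult in_Qlam_inverse Zlam_in_Qlam by presburger
qed

lemma Pi_f_code_b_in_boundary:
  assumes "2 \<le> n"
  shows "Pi_f (xval (code_b n)) \<in> boundary_Xi"
proof -
  let ?xa = "xval (code_a n)" and ?xb = "xval (code_b n)"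
  have "lam_comb (of_int 1) (of_int (-2)) (of_int 1) \<in> Zlam"
    unfolding Zlam_def by blast
  then have "in_Qlam ?xa" "Pi_f ?xa = Pi_f ?xb"
    using Pi_f_add_Zlam[OF xval_code_b_in_Qlam[OF assms]] xval_code_a[OF assms] by simp_all
  moreover have "?xa \<noteq> ?xb"
  proof -
    have "0 < lam_comb 1 (-2) 1"
      by (simp add: lam_comb_sign_simps)
    then show ?thesis
      using xval_code_a[OF assms] by simp
  qed
  moreover have "periodic_point ?xa" "periodic_point ?xb"
    using periodic_point_xval[OF code_a_in_V[OF assms], of n] code_a_periodic
      periodic_point_xval[OF code_b_in_V[OF assms], of n] code_b_periodic assms
    by simp_all
  ultimately have "1 < kappa (Pi_f ?xb)"
    using kappa_gt_1 xval_code_b_in_Qlam[OF assms] by blast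
  then show ?thesis
    unfolding boundary_Xi_def using Pi_f_in_Xi[OF xval_code_b_in_Qlam[OF assms]] by blast
qed

lemma lam_comb_int_eq_iff:
  "lam_comb (of_int a) (of_int b) (of_int c) = lam_comb (of_int a') (of_int b') (of_int c')
     \<longleftrightarrow> a = a' \<and> b = b' \<and> c = c'"
  using lam_comb_rat_eq_iff[of "of_int a" "of_int b" "of_int c" "of_int a'" "of_int b'" "of_int c'"]
  by simp

lemma not_Zlam_multiple:
  assumes "0 < D" "D < q" "z \<in> Zlam"
  shows "of_int D * lam_comb 0 (-1) 2 \<noteq> of_int q * z"
proof
  obtain a b c where z: "z = lam_comb (of_int a) (of_int b) (of_int c)"
    using assms(3) by (auto simp: Zlam_def)
  assume "of_int D * lam_comb 0 (-1) 2 = of_int q * z"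
  then have "lam_comb (of_int 0) (of_int (- D)) (of_int (D * 2)) = lam_comb (of_int (q * a)) (of_int (q * b)) (of_int (q * c))"
    unfolding z lam_comb_scale by simp
  then have "- D = q * b"
    unfolding lam_comb_int_eq_iff by simp
  show False
  proof (cases "0 \<le> b")
    case True
    then have "0 \<le> q * b"
      using assms(1,2) by simp
    then show False
      using \<open>- D = q * b\<close> assms(1) by linarith
  next
    case False
    then have "q * b \<le> q * (- 1)"
      using assms(1,2) by (intro mult_left_mono) auto
    then show False
      using \<open>- D = q * b\<close> assms(2) by simp
  qed
qed

theorem proposition1:
  shows "infinite boundary_Xi"
proof
  assume "finite boundary_Xi"
  then obtain D :: int where "0 < D" and D: "\<forall>\<xi>\<in>boundary_Xi. of_int D * \<xi> \<in> Zlam"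
    using Xi_common_denominator[of boundary_Xi] by (auto simp: boundary_Xi_def)
  obtain n z where "2 \<le> n" "z \<in> Zlam" and z: "omega ^ n - 1 = of_int (D + 1) * z"
    using omega_power_cong_1[of "D + 1"] \<open>0 < D\<close> by auto
  let ?x = "xval (code_b n)"
  have "of_int D * Pi_f ?x \<in> Zlam" "of_int D * (?x - Pi_f ?x) \<in> Zlam"
    using D Pi_f_code_b_in_boundary[OF \<open>2 \<le> n\<close>]
      Zlam_mult[OF of_int_in_Zlam Pi_f_diff_in_Zlam[OF xval_code_b_in_Qlam[OF \<open>2 \<le> n\<close>]]]
    by auto
  then have "of_int D * Pi_f ?x + of_int D * (?x - Pi_f ?x) \<in> Zlam"
    by (rule Zlam_add)
  then have "of_int D * ?x \<in> Zlam"
    by (simp add: algebra_simps)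
  then have "- (of_int D * ?x * z) \<in> Zlam"
    using Zlam_uminus Zlam_mult \<open>z \<in> Zlam\<close> by blast
  moreover have "of_int D * lam_comb 0 (-1) 2 = of_int (D + 1) * - (of_int D * ?x * z)"
  proof -
    have "1 - omega ^ n = - (of_int (D + 1) * z)"
      by (metis minus_diff_eq z)
    then have "of_int D * ?x * (1 - omega ^ n) = of_int (D + 1) * - (of_int D * ?x * z)"
      by (simp add: mult_ac)
    then show ?thesis
      by (simp add: xval_code_b[OF \<open>2 \<le> n\<close>] mult.assoc)
  qed
  moreover have "D < D + 1"
    by simp
  ultimately show False
    using not_Zlam_multiple \<open>0 < D\<close> by blast
qed

end
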